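(* Let $P$ be a domain and $D\ge 2$ an integer. Let $q_1,\dots,q_\ell$ ($\ell\ge1$) be distinct pixels of $P$ forming a path $q_1q_2\cdots q_\ell$ in $G_P$ whose pixel centers lie either on one straight segment or on two perpendicular segments meeting at one bend, such that $q_1$ is a boundary pixel and $\mathrm{vdist}(q_i)=i$ for $i=1,\dots,\ell$. Let $1\le J\le \ell$, and suppose $q_1,\dots,q_J$ carry no snow, each of $q_{J+1},\dots,q_\ell$ carries exactly one unit of snow, and the snowblower stands on $q_1$. Write $\ell-J=kD+r$ with integers $k\ge0$, $0\le r<D$, and let $\Delta=\frac1D\sum_{i=J+1}^{\ell} i$. Then in the default model there is a sequence of moves obeying the capacity constraint, in which the snowblower only visits pixels among $q_1,\dots,q_\ell$ and snow is only thrown onto pixels among $q_1,\dots,q_\ell$ or out of $P$, which ends with the snowblower on $q_1$ and none of $q_1,\dots,q_\ell$ carrying snow, and whose number of moves is at most $2(\ell-1)+4\Delta$ if $D\ge4$ and at most $2(\ell-1)+2\Delta$ if $D\in\{2,3\}$. Moreover, if $r=0$, the number of moves is at most $4\Delta$ if $D\ge 4$ and at most $2\Delta$ if $D\in\{2,3\}$.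
   Context: A pixel is a closed unit square $[i,i+1]\times[j,j+1]$, $i,j\in\mathbb{Z}$; two pixels are adjacent if they share a side. The domain $P$ is a finite set of pixels whose dual graph $G_P$ (vertex per pixel, edges between adjacent pixels) is connected. A boundary side is a side of a pixel of $P$ not shared with another pixel of $P$; a boundary pixel is a pixel of $P$ with a boundary side. For $q\in P$, $\mathrm{vdist}(q)=1+\min_{b}\mathrm{dist}_{G_P}(q,b)$, the minimum over boundary pixels $b$ of $P$. A move (default model): the snowblower goes from its pixel $v$ to an adjacent pixel $u\in P$, and upon entering $u$ all snow on $u$ is thrown onto any chosen one of the four pixels adjacent to $u$ (including $v$); if that pixel is not in $P$ the snow disappears, otherwise it is added to the snow there. Capacity constraint: at all times every pixel of $P$ carries at most $D$ units of snow. *)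

theory Defs
  imports Complex_Main
begin

text \<open>A pixel [i,i+1] x [j,j+1] is represented by its lower-left corner (i,j).\<close>
type_synonym pixel = "int \<times> int"

definition adj :: "pixel \<Rightarrow> pixel \<Rightarrow> bool" where
  "adj p p' \<longleftrightarrow> \<bar>fst p - fst p'\<bar> + \<bar>snd p - snd p'\<bar> = 1"

definition adjP :: "pixel set \<Rightarrow> pixel \<Rightarrow> pixel \<Rightarrow> bool" where
  "adjP P p p' \<longleftrightarrow> p \<in> P \<and> p' \<in> P \<and> adj p p'"

definition domain :: "pixel set \<Rightarrow> bool" where
  "domain P \<longleftrightarrow> finite P \<and> P \<noteq> {} \<and> (\<forall>p\<in>P. \<forall>p'\<in>P. (adjP P)\<^sup>*\<^sup>* p p')"

text \<open>A boundary pixel has a side not shared with another pixel of P, i.e. the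
  pixel across that side is not in P.\<close>
definition boundary_pixel :: "pixel set \<Rightarrow> pixel \<Rightarrow> bool" where
  "boundary_pixel P p \<longleftrightarrow> p \<in> P \<and> (\<exists>p'. adj p p' \<and> p' \<notin> P)"

definition dist_GP :: "pixel set \<Rightarrow> pixel \<Rightarrow> pixel \<Rightarrow> nat" where
  "dist_GP P p p' = (LEAST n. (adjP P ^^ n) p p')"

definition vdist :: "pixel set \<Rightarrow> pixel \<Rightarrow> nat" where
  "vdist P p = 1 + (LEAST n. \<exists>b. boundary_pixel P b \<and> dist_GP P p b = n)"

text \<open>Snow configuration: amount of snow on each pixel (only pixels of P matter).
  A move: (u, t) = snowblower enters u, all snow of u is thrown onto t.\<close>
type_synonym snow = "pixel \<Rightarrow> nat"

definition move_snow :: "pixel set \<Rightarrow> snow \<Rightarrow> pixel \<Rightarrow> pixel \<Rightarrow> snow" where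
  "move_snow P s u t =
     (let s' = s(u := 0) in if t \<in> P then s'(t := s' t + s u) else s')"

fun exec :: "pixel set \<Rightarrow> nat \<Rightarrow> pixel \<times> snow \<Rightarrow> (pixel \<times> pixel) list
              \<Rightarrow> (pixel \<times> snow) option" where
  "exec P D (v, s) [] = Some (v, s)"
| "exec P D (v, s) ((u, t) # ms) =
     (if u \<in> P \<and> adj v u \<and> adj u t \<and> (\<forall>p\<in>P. move_snow P s u t p \<le> D)
      then exec P D (u, move_snow P s u t) ms else None)"

definition step :: "(nat \<Rightarrow> pixel) \<Rightarrow> nat \<Rightarrow> int \<times> int" where
  "step q i = (fst (q (Suc i)) - fst (q i), snd (q (Suc i)) - snd (q i))"

end

theory Submission
  imports Defs
begin

text \<open>The snowblower clears the path in batches of \<open>D\<close> units, nearest snow first. One sweep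
  walks out from \<open>q 1\<close> to \<open>q j\<close>, throwing the snow of each pixel it enters one step back towards
  \<open>q 1\<close>; on the way back it keeps pushing everything onto the predecessor, so that all of it ends
  up in one pile of at most \<open>D\<close> units on \<open>q 1\<close>, which is finally thrown out of \<open>P\<close> across the
  boundary side of \<open>q 1\<close>. Such a sweep costs \<open>2(j - 1)\<close> moves. Removing the \<open>D\<close> units on
  \<open>q (J+1), \<dots>, q (J+D)\<close> costs \<open>2(J + D - 1)\<close>, which is at most \<open>c/D\<close> times the sum of their
  indices \<open>D(2J + D + 1)/2\<close> for \<open>c = 4\<close>, and also for \<open>c = 2\<close> when \<open>D \<le> 3\<close>. A last incomplete
  batch costs at most \<open>2(l - 1)\<close>.\<close>

lemma adj_commute: "adj p p' = adj p' p"
  unfolding adj_def by (simp add: abs_minus_commute)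

lemma exec_append:
  "exec P D x (ms @ ms') = (case exec P D x ms of None \<Rightarrow> None | Some y \<Rightarrow> exec P D y ms')"
  by (induction P D x ms rule: exec.induct) auto

lemma sum_of_nat_greaterThanAtMost_add:
  "(\<Sum>i\<in>{m<..m + n}. real i) = real n * (2 * real m + real n + 1) / 2"
proof (induction n)
  case (Suc n)
  have "{m<..m + Suc n} = insert (Suc (m + n)) {m<..m + n}" by auto
  then show ?case using Suc by (simp add: field_simps)
qed simp

locale snow_path =
  fixes P :: "pixel set" and D :: nat and q :: "nat \<Rightarrow> pixel" and l :: nat
    and s0 :: snow and out :: pixel
  assumes D_pos: "0 < D"
    and l_pos: "1 \<le> l"
    and path_in_P: "\<forall>i\<in>{1..l}. q i \<in> P"
    and inj_path: "inj_on q {1..l}"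
    and adj_path: "\<forall>i\<in>{1..<l}. adj (q i) (q (Suc i))"
    and out_notin_P: "out \<notin> P"
    and adj_out: "adj (q 1) out"
    and s0_le_D: "\<forall>p\<in>P. s0 p \<le> D"
begin

text \<open>The sweeps never touch snow off the path, so their states are determined by the amounts
  on \<open>q 1, \<dots>, q l\<close>.\<close>
definition path_snow :: "(nat \<Rightarrow> nat) \<Rightarrow> snow" where
  "path_snow g = (\<lambda>p. if p \<in> q ` {1..l} then g (inv_into {1..l} q p) else s0 p)"

definition path_moves :: "(pixel \<times> pixel) set" where
  "path_moves = {(u, t). u \<in> q ` {1..l} \<and> (t \<in> q ` {1..l} \<or> t \<notin> P)}"

lemma path_snow_path: "k \<in> {1..l} \<Longrightarrow> path_snow g (q k) = g k"
  unfolding path_snow_def using inv_into_f_f[OF inj_path] by auto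

lemma path_snow_off_path: "p \<notin> q ` {1..l} \<Longrightarrow> path_snow g p = s0 p"
  unfolding path_snow_def by simp

lemma path_snow_cong:
  assumes "\<And>k. k \<in> {1..l} \<Longrightarrow> g k = g' k"
  shows "path_snow g = path_snow g'"
proof
  fix p
  show "path_snow g p = path_snow g' p"
    using assms by (cases "p \<in> q ` {1..l}") (auto simp: path_snow_path path_snow_off_path)
qed

lemma path_snow_s0: "path_snow (\<lambda>k. s0 (q k)) = s0"
  by (auto simp: fun_eq_iff path_snow_def f_inv_into_f)

lemma path_snow_le_D:
  assumes "\<forall>k\<in>{1..l}. g k \<le> D"
  shows "\<forall>p\<in>P. path_snow g p \<le> D"
proof
  fix p assume "p \<in> P"
  then show "path_snow g p \<le> D"
    using assms s0_le_D
    by (cases "p \<in> q ` {1..l}") (auto simp: path_snow_path path_snow_off_path)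
qed

lemma q_eq_iff: "k \<in> {1..l} \<Longrightarrow> i \<in> {1..l} \<Longrightarrow> q k = q i \<longleftrightarrow> k = i"
  using inj_path by (auto dest: inj_onD)

lemma move_snow_path:
  assumes "i \<in> {1..l}" "i' \<in> {1..l}" "i \<noteq> i'"
  shows "move_snow P (path_snow g) (q i) (q i') = path_snow (g(i := 0, i' := g i' + g i))"
proof
  fix p
  have "q i' \<in> P" using path_in_P assms by auto
  then show "move_snow P (path_snow g) (q i) (q i') p = path_snow (g(i := 0, i' := g i' + g i)) p"
    using assms
    by (cases "p \<in> q ` {1..l}")
      (auto simp: move_snow_def path_snow_path path_snow_off_path q_eq_iff)
qed

lemma move_snow_out: "move_snow P (path_snow g) (q 1) out = path_snow (g(1 := 0))"
proof
  fix p
  show "move_snow P (path_snow g) (q 1) out p = path_snow (g(1 := 0)) p"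
    using out_notin_P l_pos
    by (cases "p \<in> q ` {1..l}")
      (auto simp: move_snow_def path_snow_path path_snow_off_path q_eq_iff)
qed

definition throw_back :: "nat \<Rightarrow> pixel \<times> pixel" where
  "throw_back k = (q k, q (k - 1))"

lemma exec_throw_back:
  assumes "2 \<le> k" "k \<le> l" "adj v (q k)"
    and "\<forall>i\<in>{1..l}. (g(k := 0, k - 1 := g (k - 1) + g k)) i \<le> D"
  shows "exec P D (v, path_snow g) (throw_back k # ms)
    = exec P D (q k, path_snow (g(k := 0, k - 1 := g (k - 1) + g k))) ms"
proof -
  have "k - 1 \<in> {1..<l}" using assms(1,2) by auto
  then have "adj (q (k - 1)) (q (Suc (k - 1)))" using adj_path by blast
  then have "adj (q k) (q (k - 1))" using assms(1) adj_commute by simp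
  moreover have "q k \<in> P" using path_in_P assms(1,2) by simp
  moreover have "move_snow P (path_snow g) (q k) (q (k - 1))
      = path_snow (g(k := 0, k - 1 := g (k - 1) + g k))"
    using assms(1,2) by (intro move_snow_path) auto
  moreover have "\<forall>p\<in>P. path_snow (g(k := 0, k - 1 := g (k - 1) + g k)) p \<le> D"
    using assms(4) by (rule path_snow_le_D)
  ultimately show ?thesis
    using assms(3) by (simp add: throw_back_def)
qed

lemma exec_throw_out:
  assumes "adj v (q 1)" and "\<forall>i\<in>{1..l}. (g(1 := 0)) i \<le> D"
  shows "exec P D (v, path_snow g) ((q 1, out) # ms) = exec P D (q 1, path_snow (g(1 := 0))) ms"
proof -
  have "\<forall>p\<in>P. path_snow (g(1 := 0)) p \<le> D" by (rule path_snow_le_D) (fact assms(2))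
  moreover have "q 1 \<in> P" using path_in_P l_pos by simp
  ultimately show ?thesis using assms(1) adj_out by (simp add: move_snow_out del: One_nat_def)
qed

text \<open>The snow after walking out from \<open>q 1\<close> to \<open>q i\<close>, and when walking back at \<open>q i\<close> after
  having turned at \<open>q j\<close>.\<close>
definition outward_snow :: "(nat \<Rightarrow> nat) \<Rightarrow> nat \<Rightarrow> nat \<Rightarrow> nat" where
  "outward_snow g i k = (if k < i then g (Suc k) else if k = i then 0 else g k)"

definition inward_snow :: "(nat \<Rightarrow> nat) \<Rightarrow> nat \<Rightarrow> nat \<Rightarrow> nat \<Rightarrow> nat" where
  "inward_snow g j i k =
    (if k < i - 1 then g (Suc k) else if k = i - 1 then (\<Sum>m\<in>{i..j}. g m)
     else if k \<le> j then 0 else g k)"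

lemma exec_walk_out:
  assumes "\<forall>k\<in>{1..l}. g k \<le> D" "1 \<le> i" "i \<le> j" "j \<le> l"
  shows "exec P D (q i, path_snow (outward_snow g i)) (map throw_back [Suc i..<Suc j] @ ms)
    = exec P D (q j, path_snow (outward_snow g j)) ms"
  using assms(2,3)
proof (induction "j - i" arbitrary: i)
  case (Suc n)
  have "Suc i < Suc j" using Suc.hyps(2) by simp
  then have "[Suc i..<Suc j] = Suc i # [Suc (Suc i)..<Suc j]"
    by (rule upt_conv_Cons)
  moreover have "(outward_snow g i)(Suc i := 0, i := outward_snow g i i + outward_snow g i (Suc i))
      = outward_snow g (Suc i)"
    by (auto simp: outward_snow_def)
  moreover have "\<forall>k\<in>{1..l}. outward_snow g (Suc i) k \<le> D"
    using assms(1,4) Suc by (auto simp: outward_snow_def)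
  moreover have "adj (q i) (q (Suc i))" using adj_path Suc assms(4) by simp
  ultimately have "exec P D (q i, path_snow (outward_snow g i)) (map throw_back [Suc i..<Suc j] @ ms)
      = exec P D (q (Suc i), path_snow (outward_snow g (Suc i)))
          (map throw_back [Suc (Suc i)..<Suc j] @ ms)"
    using exec_throw_back[of "Suc i" "q i" "outward_snow g i"] Suc assms(4)
    by (simp del: upt_Suc)
  also have "\<dots> = exec P D (q j, path_snow (outward_snow g j)) ms"
    using Suc.hyps(1)[of "Suc i"] Suc.hyps(2) Suc.prems by (simp del: upt_Suc)
  finally show ?case .
qed simp

lemma exec_walk_in:
  assumes "\<forall>k\<in>{1..l}. g k \<le> D" "(\<Sum>m\<in>{2..j}. g m) \<le> D" "2 \<le> i" "i \<le> j" "j \<le> l"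
  shows "exec P D (q i, path_snow (inward_snow g j i)) (map throw_back (rev [2..<i]) @ ms)
    = exec P D (q 2, path_snow (inward_snow g j 2)) ms"
  using assms(3,4)
proof (induction i rule: nat_induct_at_least)
  case (Suc i)
  have "(\<Sum>m\<in>{i..j}. g m) = g i + (\<Sum>m\<in>{Suc i..j}. g m)"
    using Suc by (simp add: sum.atLeast_Suc_atMost)
  then have update: "(inward_snow g j (Suc i))(i := 0, i - 1 := inward_snow g j (Suc i) (i - 1)
      + inward_snow g j (Suc i) i) = inward_snow g j i"
    using Suc by (auto simp: inward_snow_def fun_eq_iff)
  have "(\<Sum>m\<in>{i..j}. g m) \<le> D"
    using Suc assms(2) order_trans[OF sum_mono2[of "{2..j}" "{i..j}" g]] by auto
  then have bound: "\<forall>k\<in>{1..l}. inward_snow g j i k \<le> D"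
    using assms(1,5) Suc by (auto simp: inward_snow_def)
  have "i \<in> {1..<l}" using Suc assms(5) by simp
  then have "adj (q i) (q (Suc i))" using adj_path by blast
  then have "adj (q (Suc i)) (q i)" by (rule adj_commute[THEN iffD1])
  moreover have "i \<le> l" using Suc assms(5) by simp
  ultimately have "exec P D (q (Suc i), path_snow (inward_snow g j (Suc i)))
      (throw_back i # map throw_back (rev [2..<i]) @ ms)
    = exec P D (q i, path_snow (inward_snow g j i)) (map throw_back (rev [2..<i]) @ ms)"
    using exec_throw_back[OF Suc.hyps _ _ bound[folded update]] unfolding update by blast
  also have "\<dots> = exec P D (q 2, path_snow (inward_snow g j 2)) ms"
    using Suc by simp
  finally show ?case using Suc by simp
qed simp

definition sweep :: "nat \<Rightarrow> (pixel \<times> pixel) list" where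
  "sweep j = map throw_back ([2..<Suc j] @ rev [2..<j]) @ [(q 1, out)]"

lemma length_sweep: "2 \<le> j \<Longrightarrow> real (length (sweep j)) = 2 * (real j - 1)"
  by (simp add: sweep_def)

lemma set_sweep:
  assumes "j \<le> l"
  shows "set (sweep j) \<subseteq> path_moves"
proof -
  have "throw_back k \<in> path_moves" if "k \<in> {2..j}" for k
    using that assms by (auto simp: throw_back_def path_moves_def intro!: imageI)
  moreover have "(q 1, out) \<in> path_moves"
    using out_notin_P l_pos by (auto simp: path_moves_def)
  ultimately show ?thesis by (auto simp: sweep_def)
qed

lemma exec_sweep:
  assumes "g 1 = 0" "\<forall>k\<in>{1..l}. g k \<le> D" "(\<Sum>m\<in>{2..j}. g m) \<le> D" "2 \<le> j" "j \<le> l"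
  shows "exec P D (q 1, path_snow g) (sweep j)
    = Some (q 1, path_snow (\<lambda>k. if k \<le> j then 0 else g k))"
proof -
  have "path_snow g = path_snow (outward_snow g 1)"
    using assms(1) by (intro path_snow_cong) (auto simp: outward_snow_def)
  then have "exec P D (q 1, path_snow g) (sweep j)
      = exec P D (q 1, path_snow (outward_snow g 1))
          (map throw_back [Suc 1..<Suc j] @ map throw_back (rev [2..<j]) @ [(q 1, out)])"
    by (simp add: sweep_def numeral_2_eq_2 del: upt_Suc)
  also have "\<dots> = exec P D (q j, path_snow (inward_snow g j j))
      (map throw_back (rev [2..<j]) @ [(q 1, out)])"
  proof -
    have "outward_snow g j = inward_snow g j j"
      using assms(4) by (auto simp: outward_snow_def inward_snow_def fun_eq_iff)
    moreover have "exec P D (q 1, path_snow (outward_snow g 1))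
        (map throw_back [Suc 1..<Suc j] @ map throw_back (rev [2..<j]) @ [(q 1, out)])
      = exec P D (q j, path_snow (outward_snow g j)) (map throw_back (rev [2..<j]) @ [(q 1, out)])"
      by (rule exec_walk_out) (use assms in auto)
    ultimately show ?thesis by simp
  qed
  also have "\<dots> = exec P D (q 2, path_snow (inward_snow g j 2)) [(q 1, out)]"
    using exec_walk_in assms(2-5) by simp
  also have "\<dots> = exec P D (q 1, path_snow ((inward_snow g j 2)(1 := 0))) []"
  proof (rule exec_throw_out)
    have "1 \<in> {1..<l}" using assms(4,5) by simp
    then have "adj (q 1) (q (Suc 1))" using adj_path by blast
    then show "adj (q 2) (q 1)" using adj_commute[of "q 1"] by (simp add: numeral_2_eq_2)
    show "\<forall>i\<in>{1..l}. ((inward_snow g j 2)(1 := 0)) i \<le> D"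
      using assms(2) by (auto simp: inward_snow_def)
  qed
  also have "(inward_snow g j 2)(1 := 0) = (\<lambda>k. if k \<le> j then 0 else g k)"
    using assms(1) by (auto simp: inward_snow_def fun_eq_iff)
  finally show ?thesis by simp
qed

definition snow_beyond :: "nat \<Rightarrow> nat \<Rightarrow> nat" where
  "snow_beyond J k = (if J < k then 1 else 0)"

lemma sum_snow_beyond: "1 \<le> J \<Longrightarrow> (\<Sum>m\<in>{2..j}. snow_beyond J m) = j - J"
proof -
  assume "1 \<le> J"
  then have "{2..j} \<inter> {m. J < m} = {J<..j}" by auto
  then show ?thesis by (simp add: snow_beyond_def sum.If_cases)
qed

lemma exec_sweep_snow_beyond:
  assumes "1 \<le> J" "J < j" "j \<le> l" "j - J \<le> D"
  shows "exec P D (q 1, path_snow (snow_beyond J)) (sweep j) = Some (q 1, path_snow (snow_beyond j))"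
proof -
  have "exec P D (q 1, path_snow (snow_beyond J)) (sweep j)
      = Some (q 1, path_snow (\<lambda>k. if k \<le> j then 0 else snow_beyond J k))"
    using assms D_pos sum_snow_beyond[of J j] by (intro exec_sweep) (auto simp: snow_beyond_def)
  also have "path_snow (\<lambda>k. if k \<le> j then 0 else snow_beyond J k) = path_snow (snow_beyond j)"
    using assms(2) by (intro path_snow_cong) (auto simp: snow_beyond_def)
  finally show ?thesis .
qed

definition move_budget :: "nat \<Rightarrow> real" where
  "move_budget J = (if D \<ge> 4 then 4 else 2) * ((\<Sum>i\<in>{J<..l}. real i) / real D)"

lemma move_budget_nonneg: "0 \<le> move_budget J"
  by (simp add: move_budget_def sum_nonneg)

lemma move_budget_split: "J + D \<le> l \<Longrightarrow> 2 * (real (J + D) - 1) + move_budget (J + D) \<le> move_budget J"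
proof -
  assume "J + D \<le> l"
  then have "{J<..l} = {J<..J + D} \<union> {J + D<..l}" by auto
  then have "(\<Sum>i\<in>{J<..l}. real i) = real D * (2 * real J + real D + 1) / 2 + (\<Sum>i\<in>{J + D<..l}. real i)"
    by (simp add: sum.union_disjoint sum_of_nat_greaterThanAtMost_add)
  moreover define c where "c = (if D \<ge> 4 then 4 else 2 :: real)"
  ultimately have "move_budget J = c * (2 * real J + real D + 1) / 2 + move_budget (J + D)"
    using D_pos by (simp add: move_budget_def c_def[symmetric] field_simps)
  moreover have "2 * (real (J + D) - 1) \<le> c * (2 * real J + real D + 1) / 2"
    by (auto simp: c_def)
  ultimately show ?thesis by simp
qed

lemma clear_path:
  assumes "1 \<le> J" "J \<le> l"
  obtains ms where "exec P D (q 1, path_snow (snow_beyond J)) ms = Some (q 1, path_snow (snow_beyond l))"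
    "set ms \<subseteq> path_moves"
    "real (length ms) \<le> 2 * (real l - 1) + move_budget J"
    "(l - J) mod D = 0 \<Longrightarrow> real (length ms) \<le> move_budget J"
  using assms
proof (induction "l - J" arbitrary: J thesis rule: less_induct)
  case less
  consider "J = l" | "J < l" "l - J < D" | "J + D \<le> l"
    using less.prems(3) by linarith
  then show ?case
  proof cases
    case 1
    then show ?thesis
      using less.prems(3) l_pos move_budget_nonneg by (intro less.prems(1)[of "[]"]) auto
  next
    case 2
    show ?thesis
    proof (rule less.prems(1))
      show "exec P D (q 1, path_snow (snow_beyond J)) (sweep l) = Some (q 1, path_snow (snow_beyond l))"
        using 2 less.prems(2) by (intro exec_sweep_snow_beyond) auto
      show "set (sweep l) \<subseteq> path_moves" by (rule set_sweep) simp
      show "real (length (sweep l)) \<le> 2 * (real l - 1) + move_budget J"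
        using 2 less.prems(2) length_sweep[of l] move_budget_nonneg[of J] by simp
      show "real (length (sweep l)) \<le> move_budget J" if "(l - J) mod D = 0"
        using 2 that by simp
    qed
  next
    case 3
    obtain ms where ms:
      "exec P D (q 1, path_snow (snow_beyond (J + D))) ms = Some (q 1, path_snow (snow_beyond l))"
      "set ms \<subseteq> path_moves"
      "real (length ms) \<le> 2 * (real l - 1) + move_budget (J + D)"
      "(l - (J + D)) mod D = 0 \<Longrightarrow> real (length ms) \<le> move_budget (J + D)"
      by (rule less.hyps[of "J + D"]) (use 3 less.prems(2) D_pos in auto)
    have length_eq: "real (length (sweep (J + D) @ ms)) = 2 * (real (J + D) - 1) + real (length ms)"
      using less.prems(2) D_pos length_sweep[of "J + D"] by simp
    have "l - J = (l - (J + D)) + D" using 3 by simp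
    then have mod_eq: "(l - J) mod D = (l - (J + D)) mod D" by simp
    show ?thesis
    proof (rule less.prems(1))
      show "exec P D (q 1, path_snow (snow_beyond J)) (sweep (J + D) @ ms)
          = Some (q 1, path_snow (snow_beyond l))"
        using 3 less.prems(2) D_pos exec_sweep_snow_beyond[of J "J + D"] ms(1)
        by (simp add: exec_append)
      show "set (sweep (J + D) @ ms) \<subseteq> path_moves" using 3 set_sweep ms(2) by simp
      show "real (length (sweep (J + D) @ ms)) \<le> 2 * (real l - 1) + move_budget J"
        using length_eq ms(3) move_budget_split[OF 3] by simp
      show "real (length (sweep (J + D) @ ms)) \<le> move_budget J" if "(l - J) mod D = 0"
        using length_eq ms(4) move_budget_split[OF 3] that mod_eq by simp
    qed
  qed
qed

end

theorem lemma3: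
  fixes P :: "pixel set" and D :: nat and q :: "nat \<Rightarrow> pixel"
    and l J :: nat and s0 :: snow
  assumes dom: "domain P"
    and D2: "D \<ge> 2"
    and l1: "l \<ge> 1"
    and inP: "\<forall>i\<in>{1..l}. q i \<in> P"
    and dist: "inj_on q {1..l}"
    and path: "\<forall>i\<in>{1..<l}. adj (q i) (q (Suc i))"
    and shape: "\<exists>m\<in>{1..l}.
        (\<forall>i\<in>{1..<m}. step q i = step q 1) \<and>
        (\<forall>i\<in>{m..<l}. step q i = step q m) \<and>
        (m < l \<and> 1 < m \<longrightarrow>
           fst (step q m) * fst (step q 1) + snd (step q m) * snd (step q 1) = 0)"
    and bd: "boundary_pixel P (q 1)"
    and vd: "\<forall>i\<in>{1..l}. vdist P (q i) = i"
    and J: "1 \<le> J" "J \<le> l"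
    and empty: "\<forall>i\<in>{1..J}. s0 (q i) = 0"
    and ones: "\<forall>i\<in>{J<..l}. s0 (q i) = 1"
    and cap0: "\<forall>p\<in>P. s0 p \<le> D"
  shows "\<exists>ms s'.
           exec P D (q 1, s0) ms = Some (q 1, s') \<and>
           (\<forall>(u, t) \<in> set ms. u \<in> q ` {1..l} \<and> (t \<in> q ` {1..l} \<or> t \<notin> P)) \<and>
           (\<forall>i\<in>{1..l}. s' (q i) = 0) \<and>
           (let Delta = (\<Sum>i\<in>{J<..l}. real i) / real D;
                c = (if D \<ge> 4 then 4 else 2 :: real)
            in real (length ms) \<le> 2 * (real l - 1) + c * Delta \<and>
               ((l - J) mod D = 0 \<longrightarrow> real (length ms) \<le> c * Delta))"
proof -
  obtain out where out: "adj (q 1) out" "out \<notin> P"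
    using bd unfolding boundary_pixel_def by blast
  interpret snow_path P D q l s0 out
    using D2 l1 inP dist path out cap0 by unfold_locales auto
  have "path_snow (snow_beyond J) = path_snow (\<lambda>k. s0 (q k))"
    using empty ones by (intro path_snow_cong) (auto simp: snow_beyond_def)
  then have s0: "s0 = path_snow (snow_beyond J)" by (simp add: path_snow_s0)
  obtain ms where ms:
    "exec P D (q 1, path_snow (snow_beyond J)) ms = Some (q 1, path_snow (snow_beyond l))"
    "set ms \<subseteq> path_moves"
    "real (length ms) \<le> 2 * (real l - 1) + move_budget J"
    "(l - J) mod D = 0 \<Longrightarrow> real (length ms) \<le> move_budget J"
    using clear_path[OF J] by blast
  show ?thesis
    unfolding Let_def
  proof (intro exI conjI impI)
    show "exec P D (q 1, s0) ms = Some (q 1, path_snow (snow_beyond l))"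
      using ms(1) s0 by simp
    show "\<forall>(u, t) \<in> set ms. u \<in> q ` {1..l} \<and> (t \<in> q ` {1..l} \<or> t \<notin> P)"
      using ms(2) unfolding path_moves_def by blast
    show "\<forall>i\<in>{1..l}. path_snow (snow_beyond l) (q i) = 0"
      by (simp add: path_snow_path snow_beyond_def)
  qed (use ms(3,4) in \<open>simp_all add: move_budget_def\<close>)
qed

end
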